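(* Let $G$ be a finite connected graph and $F$ a valid matching rule for $G$. Then there exists a prefix matching of $\Gamma$ generated by $F$.
   Context: $G$ is a finite simple connected graph with shortest-path distance $d$; $\ell(x_0,\dots,x_k)=\sum_{i=0}^{k-1}d(x_i,x_{i+1})$. A sequence is an element of $I_{k,l}(G)=\{(x_0,\dots,x_k)\in V(G)^{k+1}:x_i\ne x_{i+1}\ \forall i,\ \ell(x_0,\dots,x_k)=l\}$ for some $k,l\ge0$. Let $\Gamma$ be the directed graph whose vertices are all sequences, with an edge $a\to b$ whenever $a=(x_0,\dots,x_k)$ and $b=(x_0,\dots,\hat x_i,\dots,x_k)$ for some $1\le i\le k-1$ with $\ell(b)=\ell(a)$. A matching is a set of pairwise vertex-disjoint edges of $\Gamma$. Given a matching, the matching state of a sequence $(x_0,\dots,x_k)$ is: "unmatched" if it lies on no matching edge; "insert$(i,v)$" if it is matched to $(x_0,\dots,x_i,v,x_{i+1},\dots,x_k)$; "delete$(i)$" if it is matched to $(x_0,\dots,\hat x_i,\dots,x_k)$. A prefix matching is a matching such that whenever $(x_0,\dots,x_k)$ has state insert$(i,v)$ (resp. delete$(i)$), every sequence of the form $(x_0,\dots,x_{i+1},y_{i+2},\dots,y_{k'})$ has the same state insert$(i,v)$ (resp. delete$(i)$). A matching rule is a function $F$ from sequences to the set of symbols $\{\epsilon\}\cup\{\iota(v):v\in V(G)\}\cup\{\delta\}$. A prefix matching $M$ is generated by $F$ if for every sequence $(x_0,\dots,x_k)$, $k\ge1$, whose prefix $(x_0,\dots,x_{k-1})$ is unmatched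 in $M$, the state of $(x_0,\dots,x_k)$ is insert$(k-1,v)$ iff $F(x_0,\dots,x_k)=\iota(v)$, and is delete$(k-1)$ iff $F(x_0,\dots,x_k)=\delta$. $F$ is valid if: (1) whenever $F(x_0,\dots,x_k)=\iota(v)$, then $v\notin\{x_{k-1},x_k\}$, $d(x_{k-1},v)+d(v,x_k)=d(x_{k-1},x_k)$, $F(x_0,\dots,x_{k-1},v)=\epsilon$ and $F(x_0,\dots,x_{k-1},v,x_k)=\delta$; (2) whenever $F(x_0,\dots,x_k)=\delta$, then $d(x_{k-2},x_{k-1})+d(x_{k-1},x_k)=d(x_{k-2},x_k)$ and $F(x_0,\dots,x_{k-2},x_k)=\iota(x_{k-1})$. *)

theory Defs
  imports Main
begin

definition simple_graph :: "'a set \<Rightarrow> ('a \<Rightarrow> 'a \<Rightarrow> bool) \<Rightarrow> bool" where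
  "simple_graph V E \<longleftrightarrow>
     (\<forall>x y. E x y \<longrightarrow> x \<in> V \<and> y \<in> V) \<and>
     (\<forall>x y. E x y \<longrightarrow> E y x) \<and>
     (\<forall>x. \<not> E x x)"

definition walk :: "'a set \<Rightarrow> ('a \<Rightarrow> 'a \<Rightarrow> bool) \<Rightarrow> 'a list \<Rightarrow> bool" where
  "walk V E p \<longleftrightarrow> p \<noteq> [] \<and> set p \<subseteq> V \<and>
     (\<forall>i. Suc i < length p \<longrightarrow> E (p ! i) (p ! Suc i))"

definition connected_graph :: "'a set \<Rightarrow> ('a \<Rightarrow> 'a \<Rightarrow> bool) \<Rightarrow> bool" where
  "connected_graph V E \<longleftrightarrow>
     (\<forall>x\<in>V. \<forall>y\<in>V. \<exists>p. walk V E p \<and> hd p = x \<and> last p = y)"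

definition gdist :: "'a set \<Rightarrow> ('a \<Rightarrow> 'a \<Rightarrow> bool) \<Rightarrow> 'a \<Rightarrow> 'a \<Rightarrow> nat" where
  "gdist V E x y = (LEAST n. \<exists>p. walk V E p \<and> hd p = x \<and> last p = y \<and> length p = Suc n)"

definition is_seq :: "'a set \<Rightarrow> 'a list \<Rightarrow> bool" where
  "is_seq V xs \<longleftrightarrow> xs \<noteq> [] \<and> set xs \<subseteq> V \<and>
     (\<forall>i. Suc i < length xs \<longrightarrow> xs ! i \<noteq> xs ! Suc i)"

definition seq_len :: "'a set \<Rightarrow> ('a \<Rightarrow> 'a \<Rightarrow> bool) \<Rightarrow> 'a list \<Rightarrow> nat" where
  "seq_len V E xs = (\<Sum>i < length xs - 1. gdist V E (xs ! i) (xs ! Suc i))"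

definition remove_nth :: "nat \<Rightarrow> 'a list \<Rightarrow> 'a list" where
  "remove_nth i xs = take i xs @ drop (Suc i) xs"

definition insert_after :: "nat \<Rightarrow> 'a \<Rightarrow> 'a list \<Rightarrow> 'a list" where
  "insert_after i v xs = take (Suc i) xs @ v # drop (Suc i) xs"

definition gamma_edge :: "'a set \<Rightarrow> ('a \<Rightarrow> 'a \<Rightarrow> bool) \<Rightarrow> 'a list \<Rightarrow> 'a list \<Rightarrow> bool" where
  "gamma_edge V E a b \<longleftrightarrow> is_seq V a \<and> is_seq V b \<and>
     (\<exists>i. 1 \<le> i \<and> i + 2 \<le> length a \<and> b = remove_nth i a) \<and>
     seq_len V E b = seq_len V E a"

definition is_matching :: "'a set \<Rightarrow> ('a \<Rightarrow> 'a \<Rightarrow> bool) \<Rightarrow> ('a list \<times> 'a list) set \<Rightarrow> bool" where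
  "is_matching V E M \<longleftrightarrow>
     (\<forall>(a, b)\<in>M. gamma_edge V E a b) \<and>
     (\<forall>e1\<in>M. \<forall>e2\<in>M. e1 \<noteq> e2 \<longrightarrow>
        {fst e1, snd e1} \<inter> {fst e2, snd e2} = {})"

definition unmatched :: "('a list \<times> 'a list) set \<Rightarrow> 'a list \<Rightarrow> bool" where
  "unmatched M xs \<longleftrightarrow> (\<forall>ys. (xs, ys) \<notin> M \<and> (ys, xs) \<notin> M)"

definition state_ins :: "('a list \<times> 'a list) set \<Rightarrow> 'a list \<Rightarrow> nat \<Rightarrow> 'a \<Rightarrow> bool" where
  "state_ins M xs i v \<longleftrightarrow> Suc i < length xs \<and> (insert_after i v xs, xs) \<in> M"

definition state_del :: "('a list \<times> 'a list) set \<Rightarrow> 'a list \<Rightarrow> nat \<Rightarrow> bool" where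
  "state_del M xs i \<longleftrightarrow> Suc i < length xs \<and> (xs, remove_nth i xs) \<in> M"

definition prefix_matching :: "'a set \<Rightarrow> ('a \<Rightarrow> 'a \<Rightarrow> bool) \<Rightarrow> ('a list \<times> 'a list) set \<Rightarrow> bool" where
  "prefix_matching V E M \<longleftrightarrow> is_matching V E M \<and>
     (\<forall>xs i v. is_seq V xs \<and> state_ins M xs i v \<longrightarrow>
        (\<forall>ys. is_seq V ys \<and> i + 2 \<le> length ys \<and> take (i + 2) ys = take (i + 2) xs
              \<longrightarrow> state_ins M ys i v)) \<and>
     (\<forall>xs i. is_seq V xs \<and> state_del M xs i \<longrightarrow>
        (\<forall>ys. is_seq V ys \<and> i + 2 \<le> length ys \<and> take (i + 2) ys = take (i + 2) xs
              \<longrightarrow> state_del M ys i))"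

datatype 'a symbol = Eps | Iota 'a | Delta

text \<open>A matching rule assigns to each sequence a symbol epsilon, iota(v) with v \<in> V(G), or delta.
  It is modelled as a function on all lists; only its values on sequences matter.\<close>
definition matching_rule :: "'a set \<Rightarrow> ('a list \<Rightarrow> 'a symbol) \<Rightarrow> bool" where
  "matching_rule V F \<longleftrightarrow> (\<forall>xs v. is_seq V xs \<and> F xs = Iota v \<longrightarrow> v \<in> V)"

definition generated_by :: "'a set \<Rightarrow> ('a \<Rightarrow> 'a \<Rightarrow> bool) \<Rightarrow> ('a list \<times> 'a list) set
    \<Rightarrow> ('a list \<Rightarrow> 'a symbol) \<Rightarrow> bool" where
  "generated_by V E M F \<longleftrightarrow> prefix_matching V E M \<and>
     (\<forall>xs. is_seq V xs \<and> 2 \<le> length xs \<and> unmatched M (butlast xs) \<longrightarrow>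
        (\<forall>v. state_ins M xs (length xs - 2) v \<longleftrightarrow> F xs = Iota v) \<and>
        (state_del M xs (length xs - 2) \<longleftrightarrow> F xs = Delta))"

text \<open>Validity. For xs = (x_0,...,x_k): x_{k-1} = xs ! (length xs - 2),
  x_{k-2} = xs ! (length xs - 3), x_k = last xs.\<close>
definition valid_rule :: "'a set \<Rightarrow> ('a \<Rightarrow> 'a \<Rightarrow> bool) \<Rightarrow> ('a list \<Rightarrow> 'a symbol) \<Rightarrow> bool" where
  "valid_rule V E F \<longleftrightarrow>
     (\<forall>xs v. is_seq V xs \<and> F xs = Iota v \<longrightarrow>
        2 \<le> length xs \<and>
        v \<noteq> xs ! (length xs - 2) \<and> v \<noteq> last xs \<and>
        gdist V E (xs ! (length xs - 2)) v + gdist V E v (last xs)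
          = gdist V E (xs ! (length xs - 2)) (last xs) \<and>
        F (butlast xs @ [v]) = Eps \<and>
        F (butlast xs @ [v, last xs]) = Delta) \<and>
     (\<forall>xs. is_seq V xs \<and> F xs = Delta \<longrightarrow>
        3 \<le> length xs \<and>
        gdist V E (xs ! (length xs - 3)) (xs ! (length xs - 2))
          + gdist V E (xs ! (length xs - 2)) (last xs)
          = gdist V E (xs ! (length xs - 3)) (last xs) \<and>
        F (butlast (butlast xs) @ [last xs]) = Iota (xs ! (length xs - 2)))"

end

theory Submission
  imports Defs
begin

text \<open>Match a sequence a with a minus its entry x_i, where (x_0, ..., x_{i+1}) is the shortest
  prefix of length at least 2 on which F is not \<open>\<epsilon>\<close>, whenever F gives \<open>\<delta>\<close> there. Validity
  makes this a matching of \<open>\<Gamma>\<close>: x_{i-1}, x_i, x_{i+1} lie on a geodesic, so deleting x_i keeps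
  the length, and the shorter sequence first leaves \<open>\<epsilon>\<close> one step earlier with value \<open>\<iota>(x_i)\<close>;
  conversely, inserting v where F first gives \<open>\<iota>(v)\<close> yields a sequence that first gives \<open>\<delta>\<close>
  at the inserted vertex. So every matching state is determined by this first decision, which
  depends on a prefix only, and that is exactly what being a prefix matching generated by F asks.\<close>

lemma length_remove_nth [simp]: "i < length xs \<Longrightarrow> length (remove_nth i xs) = length xs - 1"
  by (simp add: remove_nth_def)

lemma nth_remove_nth:
  "i < length xs \<Longrightarrow> k < length xs - 1 \<Longrightarrow>
   remove_nth i xs ! k = (if k < i then xs ! k else xs ! Suc k)"
  by (auto simp: remove_nth_def nth_append min_def)

lemma take_remove_nth: "q \<le> i \<Longrightarrow> take q (remove_nth i xs) = take q xs"
  by (simp add: remove_nth_def min_def)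

lemma take_Suc_remove_nth:
  "Suc i < length xs \<Longrightarrow> take (Suc i) (remove_nth i xs) = take i xs @ [xs ! Suc i]"
  by (simp add: remove_nth_def take_Suc_conv_app_nth)

lemma length_insert_after [simp]: "i < length xs \<Longrightarrow> length (insert_after i v xs) = Suc (length xs)"
  by (simp add: insert_after_def)

lemma nth_insert_after_inserted: "i < length xs \<Longrightarrow> insert_after i v xs ! Suc i = v"
  by (simp add: insert_after_def nth_append)

lemma take_insert_after: "q \<le> Suc i \<Longrightarrow> i < length xs \<Longrightarrow> take q (insert_after i v xs) = take q xs"
  by (simp add: insert_after_def)

lemma take_insert_after_inserted:
  "i < length xs \<Longrightarrow> take (i + 2) (insert_after i v xs) = take (Suc i) xs @ [v]"
  by (simp add: insert_after_def)

lemma take_insert_after_successor: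
  "Suc i < length xs \<Longrightarrow> take (Suc i + 2) (insert_after i v xs) = take (Suc i) xs @ [v, xs ! Suc i]"
  by (simp add: insert_after_def take_Suc_conv_app_nth Cons_nth_drop_Suc[symmetric])

lemma remove_nth_insert_after: "i < length xs \<Longrightarrow> remove_nth (Suc i) (insert_after i v xs) = xs"
  by (simp add: insert_after_def remove_nth_def)

lemma insert_after_remove_nth:
  "Suc i < length xs \<Longrightarrow> insert_after i (xs ! Suc i) (remove_nth (Suc i) xs) = xs"
  by (simp add: insert_after_def remove_nth_def Cons_nth_drop_Suc)

lemma last_take_conv_nth: "0 < q \<Longrightarrow> q \<le> length xs \<Longrightarrow> last (take q xs) = xs ! (q - 1)"
  by (subst last_conv_nth) auto

lemma is_seq_iff: "is_seq V xs \<longleftrightarrow> xs \<noteq> [] \<and> set xs \<subseteq> V \<and> successively (\<noteq>) xs"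
  by (simp add: is_seq_def successively_conv_nth)

lemma is_seq_take: "is_seq V xs \<Longrightarrow> 0 < q \<Longrightarrow> is_seq V (take q xs)"
  unfolding is_seq_def by (auto dest: in_set_takeD)

lemma successively_insert:
  assumes "successively P (as @ bs)" "as \<noteq> []" "bs \<noteq> []" "P (last as) v" "P v (hd bs)"
  shows "successively P (as @ v # bs)"
  using assms by (auto simp: successively_append_iff successively_Cons)

lemma successively_remove:
  assumes "successively P (as @ x # bs)" "as \<noteq> []" "bs \<noteq> []" "P (last as) (hd bs)"
  shows "successively P (as @ bs)"
  using assms by (auto simp: successively_append_iff successively_Cons)

lemma is_seq_remove_nth:
  assumes xs: "is_seq V xs" and i: "Suc (Suc i) < length xs"
    and ends: "xs ! i \<noteq> xs ! Suc (Suc i)"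
  shows "is_seq V (remove_nth (Suc i) xs)"
proof -
  have "successively (\<noteq>) (take (Suc i) xs @ xs ! Suc i # drop (Suc (Suc i)) xs)"
    using xs i by (simp add: is_seq_iff id_take_nth_drop[symmetric])
  from successively_remove[OF this]
  have "successively (\<noteq>) (remove_nth (Suc i) xs)"
    unfolding remove_nth_def using i ends by (force simp: last_take_conv_nth hd_drop_conv_nth)
  then show ?thesis
    using xs by (auto simp: is_seq_iff remove_nth_def dest: in_set_takeD in_set_dropD)
qed

lemma is_seq_insert_after:
  assumes xs: "is_seq V xs" and i: "Suc i < length xs"
    and v: "v \<in> V" "v \<noteq> xs ! i" "v \<noteq> xs ! Suc i"
  shows "is_seq V (insert_after i v xs)"
proof -
  have "successively (\<noteq>) (take (Suc i) xs @ drop (Suc i) xs)"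
    using xs by (simp add: is_seq_iff)
  from successively_insert[OF this]
  have "successively (\<noteq>) (insert_after i v xs)"
    unfolding insert_after_def using i v by (force simp: last_take_conv_nth hd_drop_conv_nth)
  then show ?thesis
    using xs v by (auto simp: is_seq_iff insert_after_def dest: in_set_takeD in_set_dropD)
qed

lemma remove_nth_inject:
  assumes "is_seq V xs" "i < length xs" "j < length xs" "remove_nth i xs = remove_nth j xs"
  shows "i = j"
proof (rule ccontr)
  assume "i \<noteq> j"
  then obtain k l where kl: "k < l" "l < length xs" "remove_nth k xs = remove_nth l xs"
    using assms by (metis linorder_neqE_nat)
  have "xs ! Suc k = remove_nth k xs ! k" using kl(1,2) by (simp add: nth_remove_nth)
  also have "\<dots> = remove_nth l xs ! k" using kl(3) by simp
  also have "\<dots> = xs ! k" using kl(1,2) by (simp add: nth_remove_nth)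
  finally have "xs ! Suc k = xs ! k" .
  moreover have "xs ! k \<noteq> xs ! Suc k"
    using assms(1) kl(1,2) by (simp add: is_seq_def)
  ultimately show False by simp
qed

fun path_length :: "('a \<Rightarrow> 'a \<Rightarrow> nat) \<Rightarrow> 'a list \<Rightarrow> nat" where
  "path_length d (x # y # zs) = d x y + path_length d (y # zs)"
| "path_length d _ = 0"

lemma sum_adjacent_eq_path_length:
  "(\<Sum>i < length xs - 1. d (xs ! i) (xs ! Suc i)) = path_length d xs"
proof (induction d xs rule: path_length.induct)
  case (1 d x y zs)
  have "(\<Sum>i < length (x # y # zs) - 1. d ((x # y # zs) ! i) ((x # y # zs) ! Suc i))
      = d x y + (\<Sum>i < length (y # zs) - 1. d ((y # zs) ! i) ((y # zs) ! Suc i))"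
    by (simp add: sum.lessThan_Suc_shift del: sum.lessThan_Suc)
  then show ?case using 1 by simp
qed auto

lemma seq_len_eq_path_length: "seq_len V E xs = path_length (gdist V E) xs"
  unfolding seq_len_def by (rule sum_adjacent_eq_path_length)

lemma path_length_append:
  "as \<noteq> [] \<Longrightarrow> bs \<noteq> [] \<Longrightarrow>
   path_length d (as @ bs) = path_length d as + d (last as) (hd bs) + path_length d bs"
proof (induction as rule: induct_list012)
  case (3 x y zs)
  then show ?case by (cases bs) auto
qed (auto simp: neq_Nil_conv)

lemma path_length_insert:
  "as \<noteq> [] \<Longrightarrow> bs \<noteq> [] \<Longrightarrow>
   path_length d (as @ v # bs) + d (last as) (hd bs) = path_length d (as @ bs) + d (last as) v + d v (hd bs)"
  by (simp add: path_length_append) (cases bs; simp)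

lemma gdist_self: "x \<in> V \<Longrightarrow> gdist V E x x = 0"
  unfolding gdist_def walk_def
  by (rule Least_eq_0) (rule exI[of _ "[x]"], simp)

lemma gdist_eq_0_imp_eq:
  assumes "connected_graph V E" "x \<in> V" "y \<in> V" "gdist V E x y = 0"
  shows "x = y"
proof -
  have ex: "\<exists>n p. walk V E p \<and> hd p = x \<and> last p = y \<and> length p = Suc n"
    using assms(1-3) unfolding connected_graph_def walk_def
    by (metis length_greater_0_conv Suc_pred)
  then obtain p where "walk V E p" "hd p = x" "last p = y" "length p = Suc 0"
    using LeastI_ex[OF ex] assms(4) unfolding gdist_def by auto
  then show ?thesis by (cases p) auto
qed

lemma geodesic_ends_distinct:
  assumes "connected_graph V E" "x \<in> V" "y \<in> V" "x \<noteq> y"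
    and "gdist V E x y + gdist V E y z = gdist V E x z"
  shows "x \<noteq> z"
  using assms gdist_self[of x V E] gdist_eq_0_imp_eq by fastforce

lemma gamma_edge_remove_nth:
  assumes conn: "connected_graph V E" and xs: "is_seq V xs" and i: "Suc (Suc i) < length xs"
    and geodesic: "gdist V E (xs ! i) (xs ! Suc i) + gdist V E (xs ! Suc i) (xs ! Suc (Suc i))
                     = gdist V E (xs ! i) (xs ! Suc (Suc i))"
  shows "gamma_edge V E xs (remove_nth (Suc i) xs)"
proof -
  have in_V: "xs ! i \<in> V" "xs ! Suc i \<in> V"
    using xs i by (auto simp: is_seq_def)
  have "xs ! i \<noteq> xs ! Suc i"
    using xs i by (simp add: is_seq_def)
  then have "is_seq V (remove_nth (Suc i) xs)"
    using geodesic_ends_distinct[OF conn in_V _ geodesic] is_seq_remove_nth[OF xs i] by blast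
  moreover have "seq_len V E (remove_nth (Suc i) xs) = seq_len V E xs"
  proof -
    let ?as = "take (Suc i) xs" and ?bs = "drop (Suc (Suc i)) xs"
    have ends: "last ?as = xs ! i" "hd ?bs = xs ! Suc (Suc i)"
      using i by (simp_all add: last_take_conv_nth hd_drop_conv_nth)
    have split: "?as @ xs ! Suc i # ?bs = xs" "?as @ ?bs = remove_nth (Suc i) xs"
      using i by (simp_all add: id_take_nth_drop[symmetric] remove_nth_def)
    have "?as \<noteq> []" "?bs \<noteq> []" using i by auto
    from path_length_insert[OF this, of "gdist V E" "xs ! Suc i"]
    show ?thesis unfolding split ends seq_len_eq_path_length using geodesic by simp
  qed
  ultimately show ?thesis
    using xs i unfolding gamma_edge_def by (auto intro!: exI[of _ "Suc i"])
qed

text \<open>The index i, rather than the prefix length i + 2, is recorded because it is the index of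
  the matching state this prefix determines.\<close>

definition decides :: "('a list \<Rightarrow> 'a symbol) \<Rightarrow> 'a list \<Rightarrow> nat \<Rightarrow> bool" where
  "decides F xs i \<longleftrightarrow> i + 2 \<le> length xs \<and> F (take (i + 2) xs) \<noteq> Eps \<and>
     (\<forall>j < i. F (take (j + 2) xs) = Eps)"

lemma decides_unique: "decides F xs i \<Longrightarrow> decides F xs j \<Longrightarrow> i = j"
  unfolding decides_def by (metis linorder_neqE_nat)

lemma decides_take_eq:
  assumes "decides F xs i" "i + 2 \<le> length ys" "take (i + 2) ys = take (i + 2) xs"
  shows "decides F ys i"
proof -
  have "take (j + 2) ys = take (j + 2) xs" if "j \<le> i" for j
    using that arg_cong[OF assms(3), of "take (j + 2)"] by (simp add: min_def)
  then show ?thesis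
    using assms unfolding decides_def by simp
qed

lemma decides_exists:
  assumes "j + 2 \<le> length xs" "F (take (j + 2) xs) \<noteq> Eps"
  shows "\<exists>i. decides F xs i"
proof -
  obtain i where i: "i + 2 \<le> length xs" "F (take (i + 2) xs) \<noteq> Eps"
    and least: "\<forall>k < i. \<not> (k + 2 \<le> length xs \<and> F (take (k + 2) xs) \<noteq> Eps)"
    using exists_least_iff[of "\<lambda>i. i + 2 \<le> length xs \<and> F (take (i + 2) xs) \<noteq> Eps"] assms
    by blast
  have "decides F xs i"
    unfolding decides_def using i least by force
  then show ?thesis ..
qed

locale valid_matching_rule =
  fixes V :: "'a set" and E :: "'a \<Rightarrow> 'a \<Rightarrow> bool" and F :: "'a list \<Rightarrow> 'a symbol"
  assumes connected: "connected_graph V E"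
    and matching_rule: "matching_rule V F"
    and valid: "valid_rule V E F"
begin

lemma Iota_prefixD:
  assumes xs: "is_seq V xs" and i: "i + 2 \<le> length xs" and Fi: "F (take (i + 2) xs) = Iota v"
  shows "v \<in> V" "v \<noteq> xs ! i" "v \<noteq> xs ! Suc i"
    "F (take (Suc i) xs @ [v]) = Eps" "F (take (Suc i) xs @ [v, xs ! Suc i]) = Delta"
proof -
  let ?t = "take (i + 2) xs"
  have t: "is_seq V ?t" "length ?t = i + 2" "butlast ?t = take (Suc i) xs"
    "?t ! i = xs ! i" "last ?t = xs ! Suc i"
    using xs i by (simp_all add: is_seq_take butlast_take last_take_conv_nth)
  show "v \<in> V"
    using matching_rule t(1) Fi unfolding matching_rule_def by blast
  have "v \<noteq> ?t ! (length ?t - 2) \<and> v \<noteq> last ?t \<and>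
      F (butlast ?t @ [v]) = Eps \<and> F (butlast ?t @ [v, last ?t]) = Delta"
    using valid t(1) Fi unfolding valid_rule_def by blast
  then show "v \<noteq> xs ! i" "v \<noteq> xs ! Suc i"
    "F (take (Suc i) xs @ [v]) = Eps" "F (take (Suc i) xs @ [v, xs ! Suc i]) = Delta"
    using t by simp_all
qed

lemma Delta_prefixE:
  assumes xs: "is_seq V xs" and i: "i + 2 \<le> length xs" and Fd: "F (take (i + 2) xs) = Delta"
  obtains j where "i = Suc j"
    "gdist V E (xs ! j) (xs ! Suc j) + gdist V E (xs ! Suc j) (xs ! Suc (Suc j))
       = gdist V E (xs ! j) (xs ! Suc (Suc j))"
    "F (take (Suc j) xs @ [xs ! Suc (Suc j)]) = Iota (xs ! Suc j)"
proof -
  let ?t = "take (i + 2) xs"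
  have t: "is_seq V ?t" "length ?t = i + 2"
    using xs i by (simp_all add: is_seq_take)
  then have "3 \<le> i + 2" using valid Fd unfolding valid_rule_def by metis
  then obtain j where j: "i = Suc j" by (cases i) auto
  have "?t ! j = xs ! j" "?t ! Suc j = xs ! Suc j" "last ?t = xs ! Suc (Suc j)"
    "butlast (butlast ?t) = take (Suc j) xs"
    using i j by (simp_all add: last_take_conv_nth butlast_take)
  moreover have "length ?t - 3 = j" "length ?t - 2 = Suc j" using t j by simp_all
  moreover have "gdist V E (?t ! (length ?t - 3)) (?t ! (length ?t - 2))
        + gdist V E (?t ! (length ?t - 2)) (last ?t) = gdist V E (?t ! (length ?t - 3)) (last ?t)
      \<and> F (butlast (butlast ?t) @ [last ?t]) = Iota (?t ! (length ?t - 2))"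
    using valid t(1) Fd unfolding valid_rule_def by blast
  ultimately show ?thesis
    using that[OF j] by simp
qed

lemma decides_Iota_insert_after:
  assumes xs: "is_seq V xs" and d: "decides F xs i" and Fi: "F (take (i + 2) xs) = Iota v"
  shows "is_seq V (insert_after i v xs)" "decides F (insert_after i v xs) (Suc i)"
    "F (take (Suc i + 2) (insert_after i v xs)) = Delta"
proof -
  have i: "Suc i < length xs" using d by (simp add: decides_def)
  note v = Iota_prefixD[OF xs _ Fi]
  show "is_seq V (insert_after i v xs)"
    using is_seq_insert_after[OF xs i] v i by simp
  have take_c: "take (j + 2) (insert_after i v xs) = take (j + 2) xs" if "j < i" for j
    using that i by (simp add: take_insert_after)
  have Eps_c: "F (take (i + 2) (insert_after i v xs)) = Eps"
    using v i take_insert_after_inserted[of i xs v] by simp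
  show Delta_c: "F (take (Suc i + 2) (insert_after i v xs)) = Delta"
    using v i take_insert_after_successor[of i xs v] by simp
  show "decides F (insert_after i v xs) (Suc i)"
    unfolding decides_def
  proof (intro conjI allI impI)
    fix j assume "j < Suc i"
    then show "F (take (j + 2) (insert_after i v xs)) = Eps"
      using d take_c Eps_c unfolding decides_def by (cases "j = i") auto
  qed (use i Delta_c in simp_all)
qed

lemma decides_Delta_remove_nthE:
  assumes xs: "is_seq V xs" and d: "decides F xs i" and Fd: "F (take (i + 2) xs) = Delta"
  obtains j where "i = Suc j" "gamma_edge V E xs (remove_nth (Suc j) xs)"
    "decides F (remove_nth (Suc j) xs) j" "F (take (j + 2) (remove_nth (Suc j) xs)) = Iota (xs ! Suc j)"
proof -
  have i: "i + 2 \<le> length xs" using d by (simp add: decides_def)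
  obtain j where j: "i = Suc j"
    and geodesic: "gdist V E (xs ! j) (xs ! Suc j) + gdist V E (xs ! Suc j) (xs ! Suc (Suc j))
       = gdist V E (xs ! j) (xs ! Suc (Suc j))"
    and Fj: "F (take (Suc j) xs @ [xs ! Suc (Suc j)]) = Iota (xs ! Suc j)"
    by (rule Delta_prefixE[OF xs i Fd])
  let ?b = "remove_nth (Suc j) xs"
  have edge: "gamma_edge V E xs ?b"
    using gamma_edge_remove_nth[OF connected xs _ geodesic] i j by simp
  have take_b: "take (k + 2) ?b = take (k + 2) xs" if "k < j" for k
    using that by (simp add: take_remove_nth)
  have Iota_b: "F (take (j + 2) ?b) = Iota (xs ! Suc j)"
    using Fj i j by (simp add: take_Suc_remove_nth)
  have "decides F ?b j"
    using i j d take_b Iota_b by (simp add: decides_def)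
  then show ?thesis using that j edge Iota_b by blast
qed

definition rule_matching :: "('a list \<times> 'a list) set" where
  "rule_matching = {(xs, remove_nth i xs) | xs i.
     is_seq V xs \<and> decides F xs i \<and> F (take (i + 2) xs) = Delta}"

lemma rule_matching_edgeE:
  assumes "(a, b) \<in> rule_matching"
  obtains j where "is_seq V a" "decides F a (Suc j)" "F (take (Suc j + 2) a) = Delta"
    "b = remove_nth (Suc j) a" "gamma_edge V E a b"
    "decides F b j" "F (take (j + 2) b) = Iota (a ! Suc j)"
    "a = insert_after j (a ! Suc j) b"
proof -
  obtain i where a: "is_seq V a" "decides F a i" "F (take (i + 2) a) = Delta" "b = remove_nth i a"
    using assms unfolding rule_matching_def by blast
  then obtain j where "i = Suc j" "gamma_edge V E a b" "decides F b j"
    "F (take (j + 2) b) = Iota (a ! Suc j)"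
    using decides_Delta_remove_nthE by metis
  moreover have "a = insert_after j (a ! Suc j) b"
    using a calculation by (simp add: insert_after_remove_nth decides_def)
  ultimately show ?thesis
    using that a by simp
qed

lemma state_del_rule_matching_iff:
  assumes xs: "is_seq V xs"
  shows "state_del rule_matching xs i \<longleftrightarrow> decides F xs i \<and> F (take (i + 2) xs) = Delta"
proof
  assume "state_del rule_matching xs i"
  then have i: "Suc i < length xs" and edge: "(xs, remove_nth i xs) \<in> rule_matching"
    unfolding state_del_def by auto
  obtain j where "decides F xs j" "F (take (j + 2) xs) = Delta" "remove_nth i xs = remove_nth j xs"
    using edge unfolding rule_matching_def by blast
  moreover have "i = j"
    using remove_nth_inject[OF xs] i calculation by (simp add: decides_def)
  ultimately show "decides F xs i \<and> F (take (i + 2) xs) = Delta" by simp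
next
  assume "decides F xs i \<and> F (take (i + 2) xs) = Delta"
  then show "state_del rule_matching xs i"
    using xs unfolding state_del_def rule_matching_def by (auto simp: decides_def)
qed

lemma state_ins_rule_matching_iff:
  assumes xs: "is_seq V xs"
  shows "state_ins rule_matching xs i v \<longleftrightarrow> decides F xs i \<and> F (take (i + 2) xs) = Iota v"
proof
  assume "state_ins rule_matching xs i v"
  then have i: "Suc i < length xs" and edge: "(insert_after i v xs, xs) \<in> rule_matching"
    unfolding state_ins_def by auto
  let ?c = "insert_after i v xs"
  obtain j where j: "is_seq V ?c" "decides F ?c (Suc j)" "xs = remove_nth (Suc j) ?c"
    "decides F xs j" "F (take (j + 2) xs) = Iota (?c ! Suc j)"
    by (rule rule_matching_edgeE[OF edge]) blast
  have eq: "remove_nth (Suc i) ?c = remove_nth (Suc j) ?c"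
    using i j(3) by (simp add: remove_nth_insert_after)
  have "Suc i = Suc j"
    using remove_nth_inject[OF j(1) _ _ eq] i j(2) by (simp add: decides_def)
  then show "decides F xs i \<and> F (take (i + 2) xs) = Iota v"
    using i j by (simp add: nth_insert_after_inserted)
next
  assume ins: "decides F xs i \<and> F (take (i + 2) xs) = Iota v"
  let ?c = "insert_after i v xs"
  have i: "Suc i < length xs" using ins by (simp add: decides_def)
  have "(?c, remove_nth (Suc i) ?c) \<in> rule_matching"
    using decides_Iota_insert_after[OF xs] ins unfolding rule_matching_def by force
  then show "state_ins rule_matching xs i v"
    using i by (simp add: state_ins_def remove_nth_insert_after)
qed

lemma rule_matching_fst_unique:
  assumes "(a, b) \<in> rule_matching" "(a, b') \<in> rule_matching"
  shows "b = b'"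
proof -
  obtain j where "decides F a (Suc j)" "b = remove_nth (Suc j) a"
    by (rule rule_matching_edgeE[OF assms(1)])
  moreover obtain j' where "decides F a (Suc j')" "b' = remove_nth (Suc j') a"
    by (rule rule_matching_edgeE[OF assms(2)])
  ultimately show ?thesis using decides_unique by metis
qed

lemma rule_matching_snd_unique:
  assumes "(a, b) \<in> rule_matching" "(a', b) \<in> rule_matching"
  shows "a = a'"
proof -
  obtain j where "decides F b j" "F (take (j + 2) b) = Iota (a ! Suc j)"
    "a = insert_after j (a ! Suc j) b"
    by (rule rule_matching_edgeE[OF assms(1)])
  moreover obtain j' where "decides F b j'" "F (take (j' + 2) b) = Iota (a' ! Suc j')"
    "a' = insert_after j' (a' ! Suc j') b"
    by (rule rule_matching_edgeE[OF assms(2)])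
  ultimately show ?thesis using decides_unique by (metis symbol.inject)
qed

lemma rule_matching_fst_not_snd:
  assumes "(a, b) \<in> rule_matching"
  shows "(c, a) \<notin> rule_matching"
proof
  assume "(c, a) \<in> rule_matching"
  then obtain j' where "decides F a j'" "F (take (j' + 2) a) = Iota (c ! Suc j')"
    by (rule rule_matching_edgeE)
  moreover obtain j where "decides F a (Suc j)" "F (take (Suc j + 2) a) = Delta"
    by (rule rule_matching_edgeE[OF assms])
  ultimately show False
    using decides_unique[of F a j' "Suc j"] by simp
qed

lemma is_matching_rule_matching: "is_matching V E rule_matching"
  unfolding is_matching_def
proof (intro conjI ballI impI)
  fix e assume "e \<in> rule_matching"
  then show "case e of (a, b) \<Rightarrow> gamma_edge V E a b"
    by (cases e) (auto elim: rule_matching_edgeE)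
next
  fix e1 e2 assume "e1 \<in> rule_matching" "e2 \<in> rule_matching" "e1 \<noteq> e2"
  then show "{fst e1, snd e1} \<inter> {fst e2, snd e2} = {}"
    using rule_matching_fst_unique rule_matching_snd_unique rule_matching_fst_not_snd
    by (cases e1; cases e2) auto
qed

lemma prefix_matching_rule_matching: "prefix_matching V E rule_matching"
  unfolding prefix_matching_def
proof (intro conjI allI impI)
  fix xs ys i v
  assume "is_seq V xs \<and> state_ins rule_matching xs i v"
    and "is_seq V ys \<and> i + 2 \<le> length ys \<and> take (i + 2) ys = take (i + 2) xs"
  then show "state_ins rule_matching ys i v"
    using decides_take_eq by (metis state_ins_rule_matching_iff)
next
  fix xs ys i
  assume "is_seq V xs \<and> state_del rule_matching xs i"
    and "is_seq V ys \<and> i + 2 \<le> length ys \<and> take (i + 2) ys = take (i + 2) xs"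
  then show "state_del rule_matching ys i"
    using decides_take_eq by (metis state_del_rule_matching_iff)
qed (rule is_matching_rule_matching)

lemma decides_imp_matched:
  assumes xs: "is_seq V xs" and d: "decides F xs i"
  shows "\<not> unmatched rule_matching xs"
proof (cases "F (take (i + 2) xs)")
  case Eps
  then show ?thesis using d by (simp add: decides_def)
next
  case (Iota v)
  then have "state_ins rule_matching xs i v"
    using state_ins_rule_matching_iff[OF xs] d by simp
  then show ?thesis by (auto simp: state_ins_def unmatched_def)
next
  case Delta
  then have "state_del rule_matching xs i"
    using state_del_rule_matching_iff[OF xs] d by simp
  then show ?thesis by (auto simp: state_del_def unmatched_def)
qed

lemma decides_last_iff_unmatched_butlast:
  assumes xs: "is_seq V xs" "2 \<le> length xs" and unm: "unmatched rule_matching (butlast xs)"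
  shows "decides F xs (length xs - 2) \<longleftrightarrow> F xs \<noteq> Eps"
proof -
  have "F (take (j + 2) xs) = Eps" if j: "j + 2 < length xs" for j
  proof (rule ccontr)
    assume "F (take (j + 2) xs) \<noteq> Eps"
    then have "F (take (j + 2) (butlast xs)) \<noteq> Eps"
      using j by (simp add: take_butlast)
    moreover have "j + 2 \<le> length (butlast xs)" using j by simp
    ultimately obtain i where "decides F (butlast xs) i"
      using decides_exists by blast
    moreover have "is_seq V (butlast xs)"
      using is_seq_take[OF xs(1), of "length xs - 1"] xs(2) by (simp add: butlast_conv_take)
    ultimately show False
      using decides_imp_matched unm by blast
  qed
  then show ?thesis
    using xs(2) unfolding decides_def by auto
qed

lemma generated_by_rule_matching: "generated_by V E rule_matching F"
  unfolding generated_by_def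
proof (intro conjI allI impI prefix_matching_rule_matching)
  fix xs v
  assume xs: "is_seq V xs \<and> 2 \<le> length xs \<and> unmatched rule_matching (butlast xs)"
  then have "length xs - 2 + 2 = length xs" by auto
  then show "state_ins rule_matching xs (length xs - 2) v \<longleftrightarrow> F xs = Iota v"
    "state_del rule_matching xs (length xs - 2) \<longleftrightarrow> F xs = Delta"
    using state_ins_rule_matching_iff state_del_rule_matching_iff
      decides_last_iff_unmatched_butlast xs by auto
qed

end

theorem lemma3p2:
  fixes V :: "'a set" and E :: "'a \<Rightarrow> 'a \<Rightarrow> bool" and F :: "'a list \<Rightarrow> 'a symbol"
  assumes "finite V" and "simple_graph V E" and "connected_graph V E"
    and "matching_rule V F" and "valid_rule V E F"
  shows "\<exists>M. generated_by V E M F"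
proof -
  interpret valid_matching_rule V E F
    using assms by unfold_locales
  show ?thesis
    using generated_by_rule_matching by blast
qed

end
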